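(* Let $\vec w=(w_1,\dots,w_{N})$ be a weight tensor with $N=N_{\vec w}$ elements and initial values $\vec w^{(1)}$, quantized with a static (fixed over iterations) clipping scalar $s$ with $0<s<\max_j|w^{(1)}_j|$. Suppose the weights are trained by gradient-based updates $w_j^{(i+1)}=w_j^{(i)}-\eta_i\,\Delta^{(\mathrm{PWL})}w_j^{(i)}$, where the piece-wise linear (PWL) gradient estimate satisfies $\Delta^{(\mathrm{PWL})}w_j^{(i)}=G_j^{(i)}\cdot\mathbb{1}_{\{|w_j^{(i)}|\le s\}}$ for some upstream gradient values $G_j^{(i)}$. Let $\tilde N^{(i)}_{\vec w}=\#\{j:|w^{(i)}_j|\le s\}$ be the number of parameters learned (receiving a possibly nonzero update) at iteration $i$. Then for every iteration $i$, $$N_{\vec w}>\tilde N^{(i)}_{\vec w}\ge\tilde N^{(i+1)}_{\vec w}.$$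
   Context: The PWL estimator replaces the derivative of the clipped quantizer $\mathbb{Q}(x)=\mathrm{clip}(s\,2^{1-B}\mathrm{round}(x2^{B-1}/s),-s,s)$ by $\mathbb{1}_{\{x\in[-s,s]\}}$, so weights whose magnitude exceeds $s$ receive zero gradient. *)

theory Defs
  imports Complex_Main
begin

definition n_learned :: "(nat \<Rightarrow> nat \<Rightarrow> real) \<Rightarrow> real \<Rightarrow> nat \<Rightarrow> nat \<Rightarrow> nat" where
  "n_learned w s N i = card {j. j < N \<and> \<bar>w i j\<bar> \<le> s}"

end

theory Submission
  imports Defs
begin

text \<open>The PWL gradient vanishes outside \<open>[-s, s]\<close>, so a weight that is once clipped is never
  updated again. Hence the set of learned weights can only shrink, and a weight whose initial
  magnitude exceeds \<open>s\<close>, such as the largest one, is never learned.\<close>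

lemma n_learned_less_iff: "n_learned w s N i < N \<longleftrightarrow> (\<exists>j<N. s < \<bar>w i j\<bar>)"
proof -
  let ?L = "{j. j < N \<and> \<bar>w i j\<bar> \<le> s}"
  have "card ?L < N \<longleftrightarrow> ?L \<noteq> {..<N}"
  proof
    assume "?L \<noteq> {..<N}"
    then have "?L \<subset> {..<N}" by blast
    then show "card ?L < N"
      using psubset_card_mono[of "{..<N}" ?L] by simp
  qed (metis card_lessThan less_irrefl)
  also have "\<dots> \<longleftrightarrow> \<not> (\<forall>j<N. \<bar>w i j\<bar> \<le> s)"
    by blast
  also have "\<dots> \<longleftrightarrow> (\<exists>j<N. s < \<bar>w i j\<bar>)"
    by (simp add: not_le)
  finally show ?thesis
    unfolding n_learned_def .
qed

locale pwl_training =
  fixes w G :: "nat \<Rightarrow> nat \<Rightarrow> real" and \<eta> :: "nat \<Rightarrow> real" and s :: real and N :: nat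
  assumes update: "\<And>i j. 1 \<le> i \<Longrightarrow> j < N \<Longrightarrow>
    w (i + 1) j = w i j - \<eta> i * (G i j * (if \<bar>w i j\<bar> \<le> s then 1 else 0))"
begin

lemma clipped_weight_frozen:
  assumes "1 \<le> i" "j < N" "s < \<bar>w i j\<bar>"
  shows "w (i + 1) j = w i j"
  using update[OF assms(1,2)] assms(3) by simp

lemma clipped_weight_stays:
  assumes "1 \<le> m" "m \<le> k" "j < N" "s < \<bar>w m j\<bar>"
  shows "w k j = w m j"
  using \<open>m \<le> k\<close>
proof (induction k rule: dec_induct)
  case (step k)
  then have "s < \<bar>w k j\<bar>"
    using assms(4) by simp
  then show ?case
    using clipped_weight_frozen[of k j] step assms(1,3) by simp
qed simp

lemma n_learned_antimono:
  assumes "1 \<le> m" "m \<le> k"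
  shows "n_learned w s N k \<le> n_learned w s N m"
proof -
  have "{j. j < N \<and> \<bar>w k j\<bar> \<le> s} \<subseteq> {j. j < N \<and> \<bar>w m j\<bar> \<le> s}"
    using clipped_weight_stays[OF assms] by (auto simp: not_less[symmetric])
  then show ?thesis
    unfolding n_learned_def by (simp add: card_mono)
qed

lemma n_learned_less:
  assumes "1 \<le> m" "m \<le> k" "j < N" "s < \<bar>w m j\<bar>"
  shows "n_learned w s N k < N"
  using assms clipped_weight_stays[OF assms] n_learned_less_iff[of w s N k] by auto

end

theorem proposition2:
  fixes w :: "nat \<Rightarrow> nat \<Rightarrow> real" and G :: "nat \<Rightarrow> nat \<Rightarrow> real"
    and \<eta> :: "nat \<Rightarrow> real" and s :: real and N i :: nat
  assumes "0 < N"
    and "0 < s"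
    and "s < Max {\<bar>w 1 j\<bar> | j. j < N}"
    and "\<And>i j. 1 \<le> i \<Longrightarrow> j < N \<Longrightarrow>
           w (i + 1) j = w i j - \<eta> i * (G i j * (if \<bar>w i j\<bar> \<le> s then 1 else 0))"
    and "1 \<le> i"
  shows "N > n_learned w s N i \<and> n_learned w s N i \<ge> n_learned w s N (i + 1)"
proof -
  interpret pwl_training w G \<eta> s N
    using assms(4) by unfold_locales
  have "{\<bar>w 1 j\<bar> | j. j < N} \<noteq> {}"
    using assms(1) by auto
  then obtain j where "j < N" "s < \<bar>w 1 j\<bar>"
    using assms(3) by (auto simp: Max_gr_iff)
  then show ?thesis
    using assms(5) n_learned_less[of 1 i j] n_learned_antimono[of i "i + 1"] by simp
qed

end
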